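(* Let $\zeta=e^{-2\pi i/4}=-i$, and let $\Gamma$ be the group generated by the linear operators $L_1,L_{-1}$ on $\mathbb{C}^2$ (basis $(e_{-1},e_1)$) given by $L_1(e_{-1})=e_{-1}-\zeta e_1$, $L_1(e_1)=-\zeta e_1$, $L_{-1}(e_1)=e_1-e_{-1}$, $L_{-1}(e_{-1})=-\zeta e_{-1}$. Then the natural action of $\Gamma$ on $\mathbb{C}^2$, viewed as a real representation on $\mathbb{R}^4$, is irreducible over $\mathbb{R}$.
   Context: This is the case $d=2$, $\alpha=\frac14$ of the operators $L_p$ ($p\in\{-1,1\}$), which preserve the positive definite hermitian form $Q_{1/4}$. *)

theory Defs
  imports "HOL-Analysis.Analysis"
begin

text \<open>C^2 with basis (e_{-1}, e_1): coordinate 1 is e_{-1}, coordinate 2 is e_1.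
  Matrices act on column vectors; a matrix is given as the vector of its rows.\<close>

definition zeta :: complex where
  "zeta = exp (- (2 * of_real pi * \<i>) / 4)"

text \<open>L_1 e_{-1} = e_{-1} - zeta e_1,  L_1 e_1 = - zeta e_1.\<close>
definition L_plus :: "complex^2^2" where
  "L_plus = vector [vector [1, 0], vector [- zeta, - zeta]]"

text \<open>L_{-1} e_1 = e_1 - e_{-1},  L_{-1} e_{-1} = - zeta e_{-1}.\<close>
definition L_minus :: "complex^2^2" where
  "L_minus = vector [vector [- zeta, -1], vector [0, 1]]"

inductive_set Gamma :: "(complex^2^2) set" where
  one: "mat 1 \<in> Gamma"
| gen_plus: "L_plus \<in> Gamma"
| gen_minus: "L_minus \<in> Gamma"
| inv: "A \<in> Gamma \<Longrightarrow> matrix_inv A \<in> Gamma"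
| mult: "A \<in> Gamma \<Longrightarrow> B \<in> Gamma \<Longrightarrow> A ** B \<in> Gamma"

end

theory Submission
  imports Defs
begin

text \<open>With zeta = -\<i>, the maps L_1 - id and L_{-1} - id send every vector to the e_1-axis and to
  the e_{-1}-axis respectively, and composing them sends (0, c) to (0, -\<i> c). So an invariant
  real subspace containing a nonzero vector (0, c) also contains (0, \<i> c), hence
  the whole complex line they span over the reals; applying L_{-1} - id then yields the other axis. A nonzero
  invariant subspace always meets the e_1-axis nontrivially, since a vector killed by L_1 - id
  is moved onto the e_{-1}-axis by L_{-1} - id.\<close>

lemma zeta_eq: "zeta = - \<i>"
proof -
  have "- (2 * of_real pi * \<i>) / 4 = \<i> * complex_of_real (- (pi / 2))"
    by (simp add: field_simps)
  then show ?thesis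
    unfolding zeta_def
    by (simp only: exp_Euler) (simp add: cos_of_real sin_of_real flip: of_real_minus, simp)
qed

lemma L_plus_minus_id:
  "L_plus *v v - v = vector [0, \<i> * v$1 + (\<i> - 1) * v$2]"
  by (simp add: L_plus_def zeta_eq vec_eq_iff forall_2 matrix_vector_mult_def sum_2
      vector_2 algebra_simps)

lemma L_minus_minus_id:
  "L_minus *v v - v = vector [(\<i> - 1) * v$1 - v$2, 0]"
  by (simp add: L_minus_def zeta_eq vec_eq_iff forall_2 matrix_vector_mult_def sum_2
      vector_2 algebra_simps)

lemma subspace_complex_scale:
  fixes x :: "complex^'n"
  assumes "subspace V" "x \<in> V" "\<i> *s x \<in> V"
  shows "z *s x \<in> V"
proof -
  have "z *s x = Re z *\<^sub>R x + Im z *\<^sub>R (\<i> *s x)"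
    by (subst complex_eq[of z]) (simp add: vec_eq_iff, simp add: scaleR_conv_of_real algebra_simps)
  then show ?thesis
    using assms by (simp add: subspace_add subspace_scale)
qed

locale Gamma_invariant_subspace =
  fixes V :: "(complex^2) set"
  assumes subspace: "subspace V"
    and invariant: "\<And>g v. g \<in> Gamma \<Longrightarrow> v \<in> V \<Longrightarrow> g *v v \<in> V"
begin

lemma minus_id_mem: "g \<in> Gamma \<Longrightarrow> v \<in> V \<Longrightarrow> g *v v - v \<in> V"
  using invariant subspace by (simp add: subspace_diff)

lemma second_axis_mem: "v \<in> V \<Longrightarrow> vector [0, \<i> * v$1 + (\<i> - 1) * v$2] \<in> V"
  using minus_id_mem[OF Gamma.gen_plus] by (simp add: L_plus_minus_id)

lemma first_axis_mem: "v \<in> V \<Longrightarrow> vector [(\<i> - 1) * v$1 - v$2, 0] \<in> V"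
  using minus_id_mem[OF Gamma.gen_minus] by (simp add: L_minus_minus_id)

lemma second_axis_rotate:
  assumes "vector [0, c] \<in> V"
  shows "vector [0, \<i> * c] \<in> V"
proof -
  have "vector [- c, 0] \<in> V"
    using first_axis_mem[OF assms] by (simp add: vector_2)
  then have "vector [0, - (\<i> * c)] \<in> V"
    using second_axis_mem by (fastforce simp: vector_2)
  then have "- vector [0, - (\<i> * c)] \<in> V"
    using subspace by (simp only: subspace_neg)
  moreover have "- vector [0, - (\<i> * c)] = (vector [0, \<i> * c] :: complex^2)"
    by (simp add: vec_eq_iff forall_2 vector_2)
  ultimately show ?thesis
    by simp
qed

lemma second_axis_subset:
  assumes "vector [0, c] \<in> V" "c \<noteq> 0"
  shows "vector [0, z] \<in> V"
proof -
  have "\<i> *s vector [0, c] = (vector [0, \<i> * c] :: complex^2)"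
    and "(z / c) *s vector [0, c] = (vector [0, z] :: complex^2)"
    using assms(2) by (simp_all add: vec_eq_iff forall_2 vector_2)
  then show ?thesis
    using subspace_complex_scale[OF subspace assms(1), of "z / c"] second_axis_rotate[OF assms(1)]
    by simp
qed

lemma second_axis_nonzero:
  assumes "v \<in> V" "v \<noteq> 0"
  obtains c where "vector [0, c] \<in> V" "c \<noteq> 0"
proof (cases "\<i> * v$1 + (\<i> - 1) * v$2 = 0")
  case False
  then show ?thesis
    using second_axis_mem[OF assms(1)] that by blast
next
  case True
  have "v$1 = - \<i> * (\<i> * v$1 + (\<i> - 1) * v$2) + (- 1 - \<i>) * v$2"
    by (simp add: algebra_simps)
  with True have v1: "v$1 = (- 1 - \<i>) * v$2"
    by simp
  then have "v$2 \<noteq> 0"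
    using assms(2) by (auto simp: vec_eq_iff forall_2)
  have "(\<i> - 1) * v$1 - v$2 = v$2"
    by (simp add: v1 algebra_simps)
  then have "vector [v$2, 0] \<in> V"
    using first_axis_mem[OF assms(1)] by simp
  then have "vector [0, \<i> * v$2] \<in> V"
    using second_axis_mem by (fastforce simp: vector_2)
  then show ?thesis
    using that \<open>v$2 \<noteq> 0\<close> by simp
qed

lemma eq_UNIV_if_nonzero:
  assumes "V \<noteq> {0}"
  shows "V = UNIV"
proof -
  obtain v where "v \<in> V" "v \<noteq> 0"
    using assms subspace subspace_0 by blast
  then obtain c where c: "vector [0, c] \<in> V" "c \<noteq> 0"
    using second_axis_nonzero by blast
  have "vector [z, 0] \<in> V" for z
    using first_axis_mem[OF second_axis_subset[OF c, of "- z"]] by (simp add: vector_2)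
  then have "vector [x$1, 0] + vector [0, x$2] \<in> V" for x :: "complex^2"
    using second_axis_subset[OF c] subspace by (simp add: subspace_add)
  moreover have "vector [x$1, 0] + vector [0, x$2] = x" for x :: "complex^2"
    by (simp add: vec_eq_iff forall_2 vector_2)
  ultimately have "x \<in> V" for x
    by metis
  then show ?thesis
    by blast
qed

end

theorem mainTheorem15:
  shows "\<forall>V :: (complex^2) set.
           subspace V \<and> (\<forall>g\<in>Gamma. \<forall>v\<in>V. g *v v \<in> V)
           \<longrightarrow> V = {0} \<or> V = UNIV"
proof (intro allI impI)
  fix V :: "(complex^2) set"
  assume "subspace V \<and> (\<forall>g\<in>Gamma. \<forall>v\<in>V. g *v v \<in> V)"
  then interpret Gamma_invariant_subspace V
    by unfold_locales auto
  show "V = {0} \<or> V = UNIV"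
    using eq_UNIV_if_nonzero by blast
qed

end
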